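(* Let $\tau\in(0,1)$ and let $(x_i',\epsilon_i)'\in\mathbb{R}^p\times\mathbb{R}$, $i=1,\dots,n$, be random vectors independent across $i$. Then with probability at least $1-8\tau$, $$\max_{1\le j\le p}\big|\mathbb{E}_n[x_{ij}^2\epsilon_i^2]-\bar{\mathrm{E}}[x_{ij}^2\epsilon_i^2]\big|\le4\sqrt{\frac{2\log(2p/\tau)}{n}\,Q\Big(\max_{1\le j\le p}\mathbb{E}_n[x_{ij}^4\epsilon_i^4],1-\tau\Big)}\;\vee\;2\max_{1\le j\le p}\sqrt{\frac{2\bar{\mathrm{E}}[x_{ij}^4\epsilon_i^4]}{n}}.$$
   Context: $\mathbb{E}_n[f]=\frac1n\sum_{i=1}^nf(x_i,\epsilon_i)$ and $\bar{\mathrm{E}}[f]=\frac1n\sum_{i=1}^n\mathrm{E}[f(x_i,\epsilon_i)]$. For a random variable $W$, $Q(W,1-\tau)$ denotes its $(1-\tau)$-quantile. $a\vee b=\max\{a,b\}$. *)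

theory Defs
  imports "HOL-Probability.Probability"
begin

definition emp_avg :: "nat \<Rightarrow> (nat \<Rightarrow> 'a \<Rightarrow> real) \<Rightarrow> 'a \<Rightarrow> real" where
  "emp_avg n f \<omega> = (1 / real n) * (\<Sum>i=1..n. f i \<omega>)"

definition avg_expect :: "'a measure \<Rightarrow> nat \<Rightarrow> (nat \<Rightarrow> 'a \<Rightarrow> real) \<Rightarrow> real" where
  "avg_expect M n f = (1 / real n) * (\<Sum>i=1..n. integral\<^sup>L M (f i))"

definition quantile :: "'a measure \<Rightarrow> ('a \<Rightarrow> real) \<Rightarrow> real \<Rightarrow> real" where
  "quantile M W \<alpha> = Inf {t. measure M {\<omega> \<in> space M. W \<omega> \<le> t} \<ge> \<alpha>}"

end

theory Submission
  imports Defs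
begin

text \<open>Fix a coordinate \<open>j\<close> and write \<open>Z\<^sub>i = x\<^sub>i\<^sub>j\<^sup>2 eps\<^sub>i\<^sup>2\<close>; these are nonnegative and independent.
  Let \<open>Q\<close> be the \<open>(1 - \<tau>)\<close>-quantile of \<open>max\<^sub>j E\<^sub>n[Z\<^sup>2]\<close> and \<open>A\<close> the event \<open>\<Sum>\<^sub>i Z\<^sub>i\<^sup>2 \<le> n Q\<close>.
  The upper deviation of \<open>\<Sum>\<^sub>i (Z\<^sub>i - E Z\<^sub>i)\<close> is handled by a Chernoff bound using
  \<open>exp (z - z\<^sup>2/2) \<le> 1 + z\<close> for \<open>z \<ge> 0\<close>: the random quadratic correction \<open>\<Sum>\<^sub>i Z\<^sub>i\<^sup>2\<close> is at most
  \<open>n Q\<close> on \<open>A\<close>. For the lower deviation the summands are truncated at \<open>c = sqrt (n Q)\<close>, which does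
  not change them on \<open>A\<close>; the truncations are bounded, so \<open>exp (- y) \<le> 1 - y + y\<^sup>2/2\<close> gives a Chernoff
  bound with the deterministic correction \<open>\<Sum>\<^sub>i E min(Z\<^sub>i, c)\<^sup>2\<close>. Because \<open>A\<close> has probability at least
  \<open>1 - \<tau> \<ge> e\<^sup>-\<^sup>1\<close>, independence forces this correction to be at most \<open>4 n Q\<close> and the truncation bias
  \<open>\<Sum>\<^sub>i (E Z\<^sub>i - E min(Z\<^sub>i, c))\<close> to be at most \<open>sqrt (\<Sum>\<^sub>i E Z\<^sub>i\<^sup>2)\<close>. A union bound over the \<open>p\<close>
  coordinates and the complement of \<open>A\<close> gives failure probability \<open>2 \<tau>\<close>, better than the \<open>8 \<tau>\<close>
  claimed.\<close>

lemma exp_minus_le_quadratic: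
  fixes y :: real
  assumes "0 \<le> y"
  shows "exp (- y) \<le> 1 - y + y\<^sup>2 / 2"
proof -
  have "(\<lambda>y. 1 - y + y\<^sup>2 / 2 - exp (- y)) 0 \<le> (\<lambda>y. 1 - y + y\<^sup>2 / 2 - exp (- y)) y"
  proof (rule DERIV_nonneg_imp_nondecreasing[OF assms])
    fix x :: real
    have "0 \<le> -1 + x + exp (- x)"
      using exp_ge_add_one_self[of "- x"] by linarith
    then show "\<exists>d. ((\<lambda>y. 1 - y + y\<^sup>2 / 2 - exp (- y)) has_real_derivative d) (at x) \<and> 0 \<le> d"
      by (auto intro!: exI[of _ "-1 + x + exp (- x)"] derivative_eq_intros)
  qed
  then show ?thesis
    by simp
qed

lemma exp_le_one_plus:
  fixes z :: real
  assumes "0 \<le> z"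
  shows "exp (z - z\<^sup>2 / 2) \<le> 1 + z"
proof -
  have "(\<lambda>z. ln (1 + z) - z + z\<^sup>2 / 2) 0 \<le> (\<lambda>z. ln (1 + z) - z + z\<^sup>2 / 2) z"
  proof (rule DERIV_nonneg_imp_nondecreasing[OF assms])
    fix x :: real
    assume "0 \<le> x"
    then show "\<exists>d. ((\<lambda>z. ln (1 + z) - z + z\<^sup>2 / 2) has_real_derivative d) (at x) \<and> 0 \<le> d"
      by (auto intro!: exI[of _ "1 / (1 + x) - 1 + x"] derivative_eq_intros simp: field_simps)
  qed
  then have "exp (z - z\<^sup>2 / 2) \<le> exp (ln (1 + z))"
    by simp
  with assms show ?thesis
    by simp
qed

lemma exp_mult_one_minus_le_one:
  fixes a :: real
  shows "exp a * (1 - a) \<le> 1"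
proof (cases "a \<le> 1")
  case True
  then have "exp a * (1 - a) \<le> exp a * exp (- a)"
    using exp_ge_add_one_self[of "- a"] by (intro mult_left_mono) auto
  then show ?thesis
    by (simp add: exp_minus_inverse)
next
  case False
  then have "exp a * (1 - a) \<le> 0"
    by (intro mult_nonneg_nonpos) auto
  then show ?thesis
    by simp
qed

lemma le_sqrt_of_am_gm_bound:
  fixes T S :: real
  assumes "0 \<le> S" and bound: "\<And>\<alpha>. 0 < \<alpha> \<Longrightarrow> T \<le> (\<alpha> * S + 1 / \<alpha>) / 2"
  shows "T \<le> sqrt S"
proof (cases "S = 0")
  case True
  have "\<not> 0 < T"
    using bound[of "1 / T"] True by (auto simp: field_simps)
  with True show ?thesis
    by simp
next
  case False
  with \<open>0 \<le> S\<close> have "0 < S"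
    by simp
  then have "T \<le> (1 / sqrt S * S + 1 / (1 / sqrt S)) / 2"
    by (intro bound) simp
  also have "\<dots> = sqrt S"
    using \<open>0 < S\<close> by (simp add: field_simps)
  finally show ?thesis .
qed

lemma truncation_excess_le:
  fixes z c \<alpha> :: real
  assumes "0 \<le> z" "0 \<le> c" "0 < \<alpha>"
  shows "z - min z c \<le> (\<alpha> * z\<^sup>2 + (if c < z then 1 else 0) / \<alpha>) / 2"
proof (cases "c < z")
  case True
  have "0 \<le> (\<alpha> * z - 1)\<^sup>2"
    by simp
  then have "2 * z \<le> \<alpha> * z\<^sup>2 + 1 / \<alpha>"
    using \<open>0 < \<alpha>\<close> by (simp add: field_simps power2_eq_square)
  with True \<open>0 \<le> c\<close> show ?thesis
    by simp
qed (use assms in simp)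

lemma chernoff_exponent_ge:
  fixes a b B L :: real
  assumes "0 < B" "0 < L" "b \<le> B" "sqrt (2 * L * B) \<le> a"
  shows "L \<le> sqrt (2 * L / B) * a - (sqrt (2 * L / B))\<^sup>2 * b / 2"
proof -
  have "sqrt (2 * L / B) * sqrt (2 * L * B) = sqrt ((2 * L)\<^sup>2)"
    using assms(1) by (simp add: real_sqrt_mult[symmetric] power2_eq_square)
  then have "2 * L = sqrt (2 * L / B) * sqrt (2 * L * B)"
    using assms(2) real_sqrt_abs[of "2 * L"] by simp
  also have "\<dots> \<le> sqrt (2 * L / B) * a"
    using assms by (intro mult_left_mono) auto
  finally have "2 * L \<le> sqrt (2 * L / B) * a" .
  moreover have "(sqrt (2 * L / B))\<^sup>2 * b / 2 \<le> L"
    using assms(1-3) by (simp add: field_simps)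
  ultimately show ?thesis
    by linarith
qed

lemma le_sqrt_of_sum_squares_le:
  fixes f :: "'i \<Rightarrow> real"
  assumes "(\<Sum>i\<in>I. (f i)\<^sup>2) \<le> B" "i \<in> I" "finite I"
  shows "f i \<le> sqrt B"
proof -
  have "(f i)\<^sup>2 \<le> (\<Sum>i\<in>I. (f i)\<^sup>2)"
    using assms(2,3) by (intro member_le_sum) auto
  with assms(1) show ?thesis
    by (intro real_le_rsqrt) simp
qed

context prob_space
begin

lemma expectation_prod_indep_bounded:
  fixes \<xi> :: "'i \<Rightarrow> 'a \<Rightarrow> 'b::topological_space" and f :: "'i \<Rightarrow> 'b \<Rightarrow> real"
  assumes "finite I" and indep: "indep_vars (\<lambda>_. borel) \<xi> I"
    and f_measurable: "\<And>i. i \<in> I \<Longrightarrow> f i \<in> borel_measurable borel"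
    and f_bounded: "\<And>i \<omega>. i \<in> I \<Longrightarrow> \<omega> \<in> space M \<Longrightarrow> \<bar>f i (\<xi> i \<omega>)\<bar> \<le> C"
  shows "expectation (\<lambda>\<omega>. \<Prod>i\<in>I. f i (\<xi> i \<omega>)) = (\<Prod>i\<in>I. expectation (\<lambda>\<omega>. f i (\<xi> i \<omega>)))"
proof (rule indep_vars_lebesgue_integral[OF \<open>finite I\<close> indep_vars_compose2[OF indep f_measurable]])
  fix i
  assume i: "i \<in> I"
  have "\<xi> i \<in> borel_measurable M"
    using indep i by (auto simp: indep_vars_def)
  with f_measurable[OF i] show "integrable M (\<lambda>\<omega>. f i (\<xi> i \<omega>))"
    using f_bounded[OF i] by (intro integrable_const_bound[where B = C]) auto
qed

lemma prob_sum_ge_le_exp: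
  fixes \<xi> :: "'i \<Rightarrow> 'a \<Rightarrow> 'b::topological_space" and h :: "'i \<Rightarrow> 'b \<Rightarrow> real"
  assumes "finite I" and indep: "indep_vars (\<lambda>_. borel) \<xi> I"
    and h_measurable: "\<And>i. i \<in> I \<Longrightarrow> h i \<in> borel_measurable borel"
    and h_bounded: "\<And>i \<omega>. i \<in> I \<Longrightarrow> \<omega> \<in> space M \<Longrightarrow> h i (\<xi> i \<omega>) \<le> C"
    and exp_moment: "\<And>i. i \<in> I \<Longrightarrow> expectation (\<lambda>\<omega>. exp (h i (\<xi> i \<omega>))) \<le> 1"
  shows "prob {\<omega> \<in> space M. s \<le> (\<Sum>i\<in>I. h i (\<xi> i \<omega>))} \<le> exp (- s)"
proof -
  let ?S = "\<lambda>\<omega>. \<Sum>i\<in>I. h i (\<xi> i \<omega>)"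
  have [measurable]: "\<xi> i \<in> borel_measurable M" "h i \<in> borel_measurable borel" if "i \<in> I" for i
    using indep h_measurable that by (auto simp: indep_vars_def)
  have S_measurable: "?S \<in> borel_measurable M"
    by measurable
  have "expectation (\<lambda>\<omega>. exp (?S \<omega>)) = expectation (\<lambda>\<omega>. \<Prod>i\<in>I. exp (h i (\<xi> i \<omega>)))"
    by (simp add: exp_sum \<open>finite I\<close>)
  also have "\<dots> = (\<Prod>i\<in>I. expectation (\<lambda>\<omega>. exp (h i (\<xi> i \<omega>))))"
    using h_bounded by (intro expectation_prod_indep_bounded[OF \<open>finite I\<close> indep, where C = "exp C"]) auto
  also have "\<dots> \<le> 1"
    using exp_moment by (intro prod_le_1 integral_nonneg_AE) auto
  finally have moment: "expectation (\<lambda>\<omega>. exp (?S \<omega>)) \<le> 1" .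
  have "?S \<omega> \<le> real (card I) * C" if "\<omega> \<in> space M" for \<omega>
    using sum_mono[of I "\<lambda>i. h i (\<xi> i \<omega>)" "\<lambda>_. C"] h_bounded that by simp
  then have "integrable M (\<lambda>\<omega>. exp (?S \<omega>))"
    using S_measurable by (intro integrable_const_bound[where B = "exp (real (card I) * C)"]) auto
  then have "prob {\<omega> \<in> space M. exp s \<le> exp (?S \<omega>)} \<le> expectation (\<lambda>\<omega>. exp (?S \<omega>)) / exp s"
    by (intro integral_Markov_inequality_measure[where A = "space M"]) auto
  also have "\<dots> \<le> exp (- s)"
    using moment divide_right_mono[OF moment, of "exp s"] by (simp add: exp_minus inverse_eq_divide)
  finally show ?thesis
    by simp
qed

lemma cdf_distr:
  assumes "random_variable borel W"
  shows "cdf (distr M borel W) t = prob {\<omega> \<in> space M. W \<omega> \<le> t}"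
  using assms by (simp add: cdf_def measure_distr vimage_def Int_def conj_commute)

lemma prob_le_quantile:
  assumes W: "random_variable borel W" and "0 < \<alpha>" "\<alpha> < 1"
  shows "\<alpha> \<le> prob {\<omega> \<in> space M. W \<omega> \<le> quantile M W \<alpha>}"
proof -
  interpret D: real_distribution "distr M borel W"
    using W by simp
  define S where "S = {t. \<alpha> \<le> cdf (distr M borel W) t}"
  have "quantile M W \<alpha> = Inf S"
    by (simp add: quantile_def S_def cdf_distr[OF W])
  have "eventually (\<lambda>t. \<alpha> < cdf (distr M borel W) t) at_top"
    using order_tendstoD(1)[OF D.cdf_lim_at_top_prob \<open>\<alpha> < 1\<close>] .
  then have "S \<noteq> {}"
    unfolding S_def by (auto simp: eventually_at_top_linorder intro: less_imp_le)
  have "eventually (\<lambda>t. cdf (distr M borel W) t < \<alpha>) at_bot"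
    using order_tendstoD(2)[OF D.cdf_lim_at_bot \<open>0 < \<alpha>\<close>] .
  then obtain b where "\<And>t. t \<le> b \<Longrightarrow> cdf (distr M borel W) t < \<alpha>"
    by (auto simp: eventually_at_bot_linorder)
  then have "bdd_below S"
    unfolding S_def by (intro bdd_belowI[of _ b]) (smt (verit) mem_Collect_eq)
  \<comment> \<open>every level above the infimum is attained, and the cdf is right-continuous\<close>
  have "eventually (\<lambda>t. \<alpha> \<le> cdf (distr M borel W) t) (at_right (Inf S))"
    using eventually_at_right_less[of "Inf S"]
  proof eventually_elim
    case (elim t)
    then obtain s where "s \<in> S" "s < t"
      using cInf_lessD[OF \<open>S \<noteq> {}\<close>] by blast
    then show ?case
      using D.cdf_nondecreasing[of s t] by (auto simp: S_def)
  qed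
  then have "\<alpha> \<le> cdf (distr M borel W) (Inf S)"
    using D.cdf_is_right_cont[of "Inf S"]
    by (intro tendsto_lowerbound[where F = "at_right (Inf S)"]) (auto simp: continuous_within)
  then show ?thesis
    by (simp add: \<open>quantile M W \<alpha> = Inf S\<close> cdf_distr[OF W])
qed

lemma quantile_nonneg:
  assumes W: "random_variable borel W" and W_nonneg: "\<And>\<omega>. \<omega> \<in> space M \<Longrightarrow> 0 \<le> W \<omega>"
    and "0 < \<alpha>" "\<alpha> < 1"
  shows "0 \<le> quantile M W \<alpha>"
proof (rule ccontr)
  assume "\<not> 0 \<le> quantile M W \<alpha>"
  have "\<alpha> \<le> prob {\<omega> \<in> space M. W \<omega> \<le> quantile M W \<alpha>}"
    using prob_le_quantile[OF W \<open>0 < \<alpha>\<close> \<open>\<alpha> < 1\<close>] .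
  also have "{\<omega> \<in> space M. W \<omega> \<le> quantile M W \<alpha>} = {}"
    using W_nonneg \<open>\<not> 0 \<le> quantile M W \<alpha>\<close> by force
  finally show False
    using \<open>0 < \<alpha>\<close> by simp
qed

lemma mult_prob_le_expectation:
  fixes f :: "'a \<Rightarrow> real"
  assumes A: "A \<in> events" and f: "integrable M f"
    and f_nonneg: "\<And>\<omega>. \<omega> \<in> space M \<Longrightarrow> 0 \<le> f \<omega>" and f_ge: "\<And>\<omega>. \<omega> \<in> A \<Longrightarrow> a \<le> f \<omega>"
  shows "a * prob A \<le> expectation f"
proof -
  have indicator_integrable: "integrable M (indicator A :: 'a \<Rightarrow> real)"
    using A by (simp add: less_top[symmetric])
  then have "a * prob A = expectation (\<lambda>\<omega>. a * indicator A \<omega>)"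
    using A by simp
  also have "\<dots> \<le> expectation f"
  proof (rule integral_mono[OF _ f])
    show "integrable M (\<lambda>\<omega>. a * indicator A \<omega>)"
      using indicator_integrable by simp
    fix \<omega>
    assume "\<omega> \<in> space M"
    then show "a * indicator A \<omega> \<le> f \<omega>"
      using f_nonneg f_ge by (cases "\<omega> \<in> A") auto
  qed
  finally show ?thesis .
qed

lemma prob_Max_le_ge_union_bound:
  fixes X :: "'i::finite \<Rightarrow> 'a \<Rightarrow> real" and R :: "'i \<Rightarrow> real"
  assumes A: "A \<in> events" and X: "\<And>j. X j \<in> borel_measurable M"
    and tail: "\<And>j. prob {\<omega> \<in> A. R j < X j \<omega>} \<le> \<epsilon>" and R_le: "\<And>j. R j \<le> b"
  shows "prob A - real CARD('i) * \<epsilon> \<le> prob {\<omega> \<in> space M. (MAX j. X j \<omega>) \<le> b}"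
proof -
  let ?bad = "\<lambda>j. {\<omega> \<in> A. R j < X j \<omega>}"
  have bad_events: "?bad j \<in> events" for j
    using A X by measurable
  have "A \<subseteq> {\<omega> \<in> space M. (MAX j. X j \<omega>) \<le> b} \<union> (\<Union>j. ?bad j)"
  proof
    fix \<omega>
    assume "\<omega> \<in> A"
    show "\<omega> \<in> {\<omega> \<in> space M. (MAX j. X j \<omega>) \<le> b} \<union> (\<Union>j. ?bad j)"
    proof (cases "\<exists>j. R j < X j \<omega>")
      case False
      then have "(MAX j. X j \<omega>) \<le> b"
        using R_le by (intro Max.boundedI) (auto simp: not_less intro: order_trans)
      with \<open>\<omega> \<in> A\<close> sets.sets_into_space[OF A] show ?thesis
        by auto
    qed (use \<open>\<omega> \<in> A\<close> in blast)
  qed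
  then have "prob A \<le> prob ({\<omega> \<in> space M. (MAX j. X j \<omega>) \<le> b} \<union> (\<Union>j. ?bad j))"
    using X bad_events by (intro finite_measure_mono) auto
  also have "\<dots> \<le> prob {\<omega> \<in> space M. (MAX j. X j \<omega>) \<le> b} + (\<Sum>j\<in>UNIV. prob (?bad j))"
    using X bad_events by (intro order_trans[OF measure_Un_le] add_left_mono measure_UNION_le) auto
  also have "\<dots> \<le> prob {\<omega> \<in> space M. (MAX j. X j \<omega>) \<le> b} + real CARD('i) * \<epsilon>"
    using sum_mono[of UNIV "\<lambda>j. prob (?bad j)" "\<lambda>_. \<epsilon>"] tail by simp
  finally show ?thesis
    by simp
qed
end

locale nonneg_indep_vars = prob_space +
  fixes Z :: "'i \<Rightarrow> 'a \<Rightarrow> real" and I :: "'i set"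
  assumes finite_I: "finite I"
    and indep: "indep_vars (\<lambda>_. borel) Z I"
    and nonneg: "\<And>i \<omega>. 0 \<le> Z i \<omega>"
    and square_integrable: "\<And>i. i \<in> I \<Longrightarrow> integrable M (\<lambda>\<omega>. (Z i \<omega>)\<^sup>2)"
begin

lemma measurable_Z [measurable]: "i \<in> I \<Longrightarrow> Z i \<in> borel_measurable M"
  using indep by (auto simp: indep_vars_def)

lemma integrable_Z: "i \<in> I \<Longrightarrow> integrable M (Z i)"
  by (rule square_integrable_imp_integrable) (simp_all add: square_integrable)

lemma integrable_truncation_square:
  assumes "i \<in> I" "0 \<le> c"
  shows "integrable M (\<lambda>\<omega>. (min (Z i \<omega>) c)\<^sup>2)"
  using assms nonneg
  by (intro integrable_const_bound[where B = "c\<^sup>2"]) (auto simp: min_def intro: power_mono)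

text \<open>Independence gives \<open>e\<^sup>-\<^sup>1 \<le> prob A \<le> \<Prod>\<^sub>i (1 - p\<^sub>i) \<le> exp (- \<Sum>\<^sub>i p\<^sub>i)\<close> for the tail
  probabilities \<open>p\<^sub>i\<close>.\<close>
lemma sum_prob_gt_le_one:
  assumes A: "A \<in> events" "exp (- 1) \<le> prob A"
    and below: "\<And>\<omega> i. \<omega> \<in> A \<Longrightarrow> i \<in> I \<Longrightarrow> Z i \<omega> \<le> c"
  shows "(\<Sum>i\<in>I. prob {\<omega> \<in> space M. c < Z i \<omega>}) \<le> 1"
proof (cases "I = {}")
  case False
  define p where "p i = prob {\<omega> \<in> space M. c < Z i \<omega>}" for i
  have compl: "Z i -` {..c} \<inter> space M = space M - {\<omega> \<in> space M. c < Z i \<omega>}" for i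
    by auto
  have "(\<Inter>i\<in>I. Z i -` {..c} \<inter> space M) \<in> events"
    using False finite_I by (intro sets.finite_INT) auto
  then have "prob A \<le> prob (\<Inter>i\<in>I. Z i -` {..c} \<inter> space M)"
    using A below by (intro finite_measure_mono) (auto intro: sets.sets_into_space[THEN subsetD])
  also have "\<dots> = (\<Prod>i\<in>I. prob (Z i -` {..c} \<inter> space M))"
    by (rule indep_varsD[OF indep False finite_I]) auto
  also have "\<dots> = (\<Prod>i\<in>I. 1 - p i)"
    unfolding compl p_def by (intro prod.cong refl prob_compl) measurable
  also have "\<dots> \<le> (\<Prod>i\<in>I. exp (- p i))"
  proof (rule prod_mono)
    fix i
    show "0 \<le> 1 - p i \<and> 1 - p i \<le> exp (- p i)"
      using exp_ge_add_one_self[of "- p i"] by (simp add: p_def)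
  qed
  also have "\<dots> = exp (- (\<Sum>i\<in>I. p i))"
    by (simp add: sum_negf[symmetric] exp_sum finite_I)
  finally have "exp (- 1) \<le> exp (- (\<Sum>i\<in>I. p i))"
    using A(2) by linarith
  then show ?thesis
    by (simp add: p_def)
qed simp

lemma expectation_truncation_gap:
  assumes i: "i \<in> I" and "0 \<le> c" "0 < \<alpha>"
  shows "expectation (Z i) - expectation (\<lambda>\<omega>. min (Z i \<omega>) c)
    \<le> (\<alpha> * expectation (\<lambda>\<omega>. (Z i \<omega>)\<^sup>2) + prob {\<omega> \<in> space M. c < Z i \<omega>} / \<alpha>) / 2"
proof -
  let ?tail = "{\<omega> \<in> space M. c < Z i \<omega>}"
  have tail: "?tail \<in> events"
    using i by measurable
  then have tail_integrable: "integrable M (indicator ?tail :: 'a \<Rightarrow> real)"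
    by (simp add: less_top[symmetric])
  have "expectation (Z i) - expectation (\<lambda>\<omega>. min (Z i \<omega>) c)
      = expectation (\<lambda>\<omega>. Z i \<omega> - min (Z i \<omega>) c)"
    using integrable_Z[OF i] by simp
  also have "\<dots> \<le> expectation (\<lambda>\<omega>. (\<alpha> * (Z i \<omega>)\<^sup>2 + indicator ?tail \<omega> / \<alpha>) / 2)"
  proof (rule integral_mono)
    show "integrable M (\<lambda>\<omega>. Z i \<omega> - min (Z i \<omega>) c)"
      using integrable_Z[OF i] by auto
    show "integrable M (\<lambda>\<omega>. (\<alpha> * (Z i \<omega>)\<^sup>2 + indicator ?tail \<omega> / \<alpha>) / 2)"
      using square_integrable[OF i] tail_integrable by simp
    fix \<omega>
    assume "\<omega> \<in> space M"
    then show "Z i \<omega> - min (Z i \<omega>) c \<le> (\<alpha> * (Z i \<omega>)\<^sup>2 + indicator ?tail \<omega> / \<alpha>) / 2"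
      using truncation_excess_le[OF nonneg \<open>0 \<le> c\<close> \<open>0 < \<alpha>\<close>, of i \<omega>] by (auto simp: indicator_def split: if_splits)
  qed
  also have "\<dots> = (\<alpha> * expectation (\<lambda>\<omega>. (Z i \<omega>)\<^sup>2) + prob ?tail / \<alpha>) / 2"
    using square_integrable[OF i] tail_integrable tail by (simp add: less_top[symmetric])
  finally show ?thesis .
qed

lemma sum_expectation_truncation_gap_le:
  assumes A: "A \<in> events" "exp (- 1) \<le> prob A" and "0 \<le> c"
    and below: "\<And>\<omega> i. \<omega> \<in> A \<Longrightarrow> i \<in> I \<Longrightarrow> Z i \<omega> \<le> c"
  shows "(\<Sum>i\<in>I. expectation (Z i) - expectation (\<lambda>\<omega>. min (Z i \<omega>) c))
    \<le> sqrt (\<Sum>i\<in>I. expectation (\<lambda>\<omega>. (Z i \<omega>)\<^sup>2))"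
proof (rule le_sqrt_of_am_gm_bound)
  show "0 \<le> (\<Sum>i\<in>I. expectation (\<lambda>\<omega>. (Z i \<omega>)\<^sup>2))"
    by (intro sum_nonneg integral_nonneg_AE) auto
  fix \<alpha> :: real
  assume "0 < \<alpha>"
  have "(\<Sum>i\<in>I. expectation (Z i) - expectation (\<lambda>\<omega>. min (Z i \<omega>) c))
      \<le> (\<Sum>i\<in>I. (\<alpha> * expectation (\<lambda>\<omega>. (Z i \<omega>)\<^sup>2) + prob {\<omega> \<in> space M. c < Z i \<omega>} / \<alpha>) / 2)"
    by (intro sum_mono expectation_truncation_gap \<open>0 \<le> c\<close> \<open>0 < \<alpha>\<close>)
  also have "\<dots> = (\<alpha> * (\<Sum>i\<in>I. expectation (\<lambda>\<omega>. (Z i \<omega>)\<^sup>2))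
      + (\<Sum>i\<in>I. prob {\<omega> \<in> space M. c < Z i \<omega>}) / \<alpha>) / 2"
    by (simp add: sum_divide_distrib[symmetric] sum.distrib sum_distrib_left)
  also have "\<dots> \<le> (\<alpha> * (\<Sum>i\<in>I. expectation (\<lambda>\<omega>. (Z i \<omega>)\<^sup>2)) + 1 / \<alpha>) / 2"
    using sum_prob_gt_le_one[OF A below] \<open>0 < \<alpha>\<close> by (simp add: divide_right_mono)
  finally show "(\<Sum>i\<in>I. expectation (Z i) - expectation (\<lambda>\<omega>. min (Z i \<omega>) c))
      \<le> (\<alpha> * (\<Sum>i\<in>I. expectation (\<lambda>\<omega>. (Z i \<omega>)\<^sup>2)) + 1 / \<alpha>) / 2" .
qed

lemma prob_upper_chernoff:
  assumes "0 \<le> \<theta>"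
  shows "prob {\<omega> \<in> space M. s \<le> (\<Sum>i\<in>I. \<theta> * (Z i \<omega> - expectation (Z i)) - \<theta>\<^sup>2 * (Z i \<omega>)\<^sup>2 / 2)}
    \<le> exp (- s)"
proof (rule prob_sum_ge_le_exp[OF finite_I indep,
      where h = "\<lambda>i z. \<theta> * (z - expectation (Z i)) - \<theta>\<^sup>2 * z\<^sup>2 / 2" and C = "1 / 2"])
  fix i \<omega>
  have "0 \<le> (\<theta> * Z i \<omega> - 1)\<^sup>2" "0 \<le> \<theta> * expectation (Z i)"
    using \<open>0 \<le> \<theta>\<close> nonneg by simp_all
  then show "\<theta> * (Z i \<omega> - expectation (Z i)) - \<theta>\<^sup>2 * (Z i \<omega>)\<^sup>2 / 2 \<le> 1 / 2"
    by (simp add: power2_diff power_mult_distrib right_diff_distrib)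
next
  fix i
  assume i: "i \<in> I"
  let ?m = "expectation (Z i)"
  have "exp (\<theta> * (z - ?m) - \<theta>\<^sup>2 * z\<^sup>2 / 2) = exp (- \<theta> * ?m) * exp (\<theta> * z - (\<theta> * z)\<^sup>2 / 2)" for z
    by (simp add: exp_add[symmetric] algebra_simps power_mult_distrib)
  then have "expectation (\<lambda>\<omega>. exp (\<theta> * (Z i \<omega> - ?m) - \<theta>\<^sup>2 * (Z i \<omega>)\<^sup>2 / 2))
      \<le> expectation (\<lambda>\<omega>. exp (- \<theta> * ?m) * (1 + \<theta> * Z i \<omega>))"
    using integrable_Z[OF i] \<open>0 \<le> \<theta>\<close> nonneg
    by (intro integral_mono') (auto intro!: mult_left_mono exp_le_one_plus)
  also have "\<dots> = exp (- \<theta> * ?m) * (1 - (- \<theta> * ?m))"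
    using integrable_Z[OF i] by (simp add: prob_space)
  also have "\<dots> \<le> 1"
    by (rule exp_mult_one_minus_le_one)
  finally show "expectation (\<lambda>\<omega>. exp (\<theta> * (Z i \<omega> - ?m) - \<theta>\<^sup>2 * (Z i \<omega>)\<^sup>2 / 2)) \<le> 1" .
qed measurable

lemma prob_lower_chernoff_truncated:
  assumes "0 \<le> \<theta>" "0 \<le> c"
  shows "prob {\<omega> \<in> space M. s \<le> (\<Sum>i\<in>I. \<theta> * (expectation (\<lambda>\<omega>. min (Z i \<omega>) c) - min (Z i \<omega>) c)
      - \<theta>\<^sup>2 * expectation (\<lambda>\<omega>. (min (Z i \<omega>) c)\<^sup>2) / 2)} \<le> exp (- s)"
proof (rule prob_sum_ge_le_exp[OF finite_I indep, where C = "\<theta> * c"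
      and h = "\<lambda>i z. \<theta> * (expectation (\<lambda>\<omega>. min (Z i \<omega>) c) - min z c)
                  - \<theta>\<^sup>2 * expectation (\<lambda>\<omega>. (min (Z i \<omega>) c)\<^sup>2) / 2"])
  fix i \<omega>
  assume i: "i \<in> I"
  have "expectation (\<lambda>\<omega>. min (Z i \<omega>) c) \<le> expectation (\<lambda>\<omega>. c)"
    using integrable_Z[OF i] by (intro integral_mono) auto
  then have "\<theta> * expectation (\<lambda>\<omega>. min (Z i \<omega>) c) \<le> \<theta> * c"
    using \<open>0 \<le> \<theta>\<close> by (simp add: prob_space mult_left_mono)
  moreover have "0 \<le> \<theta> * min (Z i \<omega>) c" "0 \<le> \<theta>\<^sup>2 * expectation (\<lambda>\<omega>. (min (Z i \<omega>) c)\<^sup>2) / 2"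
    using \<open>0 \<le> \<theta>\<close> nonneg \<open>0 \<le> c\<close> by simp_all
  ultimately show "\<theta> * (expectation (\<lambda>\<omega>. min (Z i \<omega>) c) - min (Z i \<omega>) c)
      - \<theta>\<^sup>2 * expectation (\<lambda>\<omega>. (min (Z i \<omega>) c)\<^sup>2) / 2 \<le> \<theta> * c"
    unfolding right_diff_distrib by linarith
next
  fix i
  assume i: "i \<in> I"
  let ?m = "expectation (\<lambda>\<omega>. min (Z i \<omega>) c)" and ?m2 = "expectation (\<lambda>\<omega>. (min (Z i \<omega>) c)\<^sup>2)"
  let ?a = "\<theta> * ?m - \<theta>\<^sup>2 * ?m2 / 2"
  have "exp (\<theta> * (?m - min z c) - \<theta>\<^sup>2 * ?m2 / 2) = exp ?a * exp (- (\<theta> * min z c))" for z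
    by (simp add: exp_add[symmetric] algebra_simps)
  moreover have "0 \<le> 1 - \<theta> * y + \<theta>\<^sup>2 * y\<^sup>2 / 2" for y
    using zero_le_power2[of "\<theta> * y - 1"] by (simp add: power2_diff power_mult_distrib)
  ultimately have "expectation (\<lambda>\<omega>. exp (\<theta> * (?m - min (Z i \<omega>) c) - \<theta>\<^sup>2 * ?m2 / 2))
      \<le> expectation (\<lambda>\<omega>. exp ?a * (1 - \<theta> * min (Z i \<omega>) c + \<theta>\<^sup>2 * (min (Z i \<omega>) c)\<^sup>2 / 2))"
    using integrable_Z[OF i] integrable_truncation_square[OF i \<open>0 \<le> c\<close>] \<open>0 \<le> \<theta>\<close> \<open>0 \<le> c\<close> nonneg
      exp_minus_le_quadratic[of "\<theta> * min (Z i _) c"]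
    by (intro integral_mono') (auto intro!: mult_left_mono simp: power_mult_distrib)
  also have "\<dots> = exp ?a * (1 - ?a)"
    using integrable_Z[OF i] integrable_truncation_square[OF i \<open>0 \<le> c\<close>]
    by (simp add: prob_space algebra_simps)
  also have "\<dots> \<le> 1"
    by (rule exp_mult_one_minus_le_one)
  finally show "expectation (\<lambda>\<omega>. exp (\<theta> * (?m - min (Z i \<omega>) c) - \<theta>\<^sup>2 * ?m2 / 2)) \<le> 1" .
qed measurable

lemma prob_upper_deviation:
  assumes "0 < B" "0 < L"
  shows "prob {\<omega> \<in> space M. (\<Sum>i\<in>I. (Z i \<omega>)\<^sup>2) \<le> B
      \<and> sqrt (2 * L * B) \<le> (\<Sum>i\<in>I. Z i \<omega> - expectation (Z i))} \<le> exp (- L)"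
proof -
  define \<theta> where "\<theta> = sqrt (2 * L / B)"
  have sum_eq: "(\<Sum>i\<in>I. \<theta> * (Z i \<omega> - expectation (Z i)) - \<theta>\<^sup>2 * (Z i \<omega>)\<^sup>2 / 2)
      = \<theta> * (\<Sum>i\<in>I. Z i \<omega> - expectation (Z i)) - \<theta>\<^sup>2 * (\<Sum>i\<in>I. (Z i \<omega>)\<^sup>2) / 2" for \<omega>
    by (simp add: sum_subtractf sum_distrib_left sum_divide_distrib right_diff_distrib)
  have "prob {\<omega> \<in> space M. (\<Sum>i\<in>I. (Z i \<omega>)\<^sup>2) \<le> B
      \<and> sqrt (2 * L * B) \<le> (\<Sum>i\<in>I. Z i \<omega> - expectation (Z i))}
    \<le> prob {\<omega> \<in> space M. L \<le> (\<Sum>i\<in>I. \<theta> * (Z i \<omega> - expectation (Z i)) - \<theta>\<^sup>2 * (Z i \<omega>)\<^sup>2 / 2)}"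
    unfolding sum_eq unfolding \<theta>_def using chernoff_exponent_ge[OF assms]
    by (intro finite_measure_mono) (blast, measurable)
  also have "\<dots> \<le> exp (- L)"
    using assms by (intro prob_upper_chernoff) (simp add: \<theta>_def)
  finally show ?thesis .
qed

lemma prob_lower_deviation_truncated:
  assumes "0 < B" "0 < L" "0 \<le> c"
    and second_moments: "(\<Sum>i\<in>I. expectation (\<lambda>\<omega>. (min (Z i \<omega>) c)\<^sup>2)) \<le> B"
  shows "prob {\<omega> \<in> space M. sqrt (2 * L * B)
      \<le> (\<Sum>i\<in>I. expectation (\<lambda>\<omega>. min (Z i \<omega>) c) - min (Z i \<omega>) c)} \<le> exp (- L)"
proof -
  define \<theta> where "\<theta> = sqrt (2 * L / B)"
  have sum_eq: "(\<Sum>i\<in>I. \<theta> * (expectation (\<lambda>\<omega>. min (Z i \<omega>) c) - min (Z i \<omega>) c)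
        - \<theta>\<^sup>2 * expectation (\<lambda>\<omega>. (min (Z i \<omega>) c)\<^sup>2) / 2)
      = \<theta> * (\<Sum>i\<in>I. expectation (\<lambda>\<omega>. min (Z i \<omega>) c) - min (Z i \<omega>) c)
        - \<theta>\<^sup>2 * (\<Sum>i\<in>I. expectation (\<lambda>\<omega>. (min (Z i \<omega>) c)\<^sup>2)) / 2" for \<omega>
    by (simp add: sum_subtractf sum_distrib_left sum_divide_distrib right_diff_distrib)
  have "prob {\<omega> \<in> space M. sqrt (2 * L * B)
      \<le> (\<Sum>i\<in>I. expectation (\<lambda>\<omega>. min (Z i \<omega>) c) - min (Z i \<omega>) c)}
    \<le> prob {\<omega> \<in> space M. L \<le> (\<Sum>i\<in>I. \<theta> * (expectation (\<lambda>\<omega>. min (Z i \<omega>) c) - min (Z i \<omega>) c)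
        - \<theta>\<^sup>2 * expectation (\<lambda>\<omega>. (min (Z i \<omega>) c)\<^sup>2) / 2)}"
    unfolding sum_eq unfolding \<theta>_def using chernoff_exponent_ge[OF assms(1,2) second_moments]
    by (intro finite_measure_mono) (blast, measurable)
  also have "\<dots> \<le> exp (- L)"
    using assms by (intro prob_lower_chernoff_truncated) (simp_all add: \<theta>_def)
  finally show ?thesis .
qed

lemma expectation_exp_neg_truncation_square:
  assumes i: "i \<in> I" and "0 < B"
  shows "expectation (\<lambda>\<omega>. exp (- (min (Z i \<omega>) (sqrt B))\<^sup>2 / B))
    \<le> exp (- expectation (\<lambda>\<omega>. (min (Z i \<omega>) (sqrt B))\<^sup>2) / (2 * B))"
proof -
  let ?Y = "\<lambda>\<omega>. min (Z i \<omega>) (sqrt B)"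
  have pointwise: "exp (- (?Y \<omega>)\<^sup>2 / B) \<le> 1 - (?Y \<omega>)\<^sup>2 / (2 * B)" for \<omega>
  proof -
    define u where "u = (?Y \<omega>)\<^sup>2 / B"
    have "(?Y \<omega>)\<^sup>2 \<le> (sqrt B)\<^sup>2"
      using nonneg[of i \<omega>] \<open>0 < B\<close> by (intro power_mono) auto
    then have "0 \<le> u" "u \<le> 1"
      using \<open>0 < B\<close> by (simp_all add: u_def)
    then have "u\<^sup>2 \<le> u"
      by (simp add: power2_eq_square mult_left_le_one_le)
    then have "exp (- u) \<le> 1 - u / 2"
      using exp_minus_le_quadratic[OF \<open>0 \<le> u\<close>] by simp
    then show ?thesis
      by (simp add: u_def)
  qed
  have "expectation (\<lambda>\<omega>. exp (- (?Y \<omega>)\<^sup>2 / B)) \<le> expectation (\<lambda>\<omega>. 1 - (?Y \<omega>)\<^sup>2 / (2 * B))"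
  proof (rule integral_mono[OF _ _ pointwise])
    show "integrable M (\<lambda>\<omega>. exp (- (?Y \<omega>)\<^sup>2 / B))"
      using i \<open>0 < B\<close> by (intro integrable_const_bound[where B = 1]) auto
    show "integrable M (\<lambda>\<omega>. 1 - (?Y \<omega>)\<^sup>2 / (2 * B))"
      using integrable_truncation_square[OF i] \<open>0 < B\<close> by simp
  qed
  also have "\<dots> = 1 - expectation (\<lambda>\<omega>. (?Y \<omega>)\<^sup>2) / (2 * B)"
    using integrable_truncation_square[OF i] \<open>0 < B\<close> by (simp add: prob_space)
  also have "\<dots> \<le> exp (- expectation (\<lambda>\<omega>. (?Y \<omega>)\<^sup>2) / (2 * B))"
    using exp_ge_add_one_self[of "- expectation (\<lambda>\<omega>. (?Y \<omega>)\<^sup>2) / (2 * B)"] by simp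
  finally show ?thesis .
qed

text \<open>On \<open>A\<close> the product \<open>\<Prod>\<^sub>i exp (- Y\<^sub>i\<^sup>2 / B)\<close> of the truncations \<open>Y\<^sub>i = min Z\<^sub>i (sqrt B)\<close> is at least
  \<open>e\<^sup>-\<^sup>1\<close>; by independence its expectation is at most \<open>exp (- \<Sum>\<^sub>i E Y\<^sub>i\<^sup>2 / 2B)\<close>.\<close>
lemma sum_truncated_second_moment_le:
  assumes A: "A \<in> events" "exp (- 1) \<le> prob A" and "0 < B"
    and on_A: "\<And>\<omega>. \<omega> \<in> A \<Longrightarrow> (\<Sum>i\<in>I. (Z i \<omega>)\<^sup>2) \<le> B"
  shows "(\<Sum>i\<in>I. expectation (\<lambda>\<omega>. (min (Z i \<omega>) (sqrt B))\<^sup>2)) \<le> 4 * B"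
proof -
  let ?Y = "\<lambda>i \<omega>. min (Z i \<omega>) (sqrt B)"
  let ?f = "\<lambda>i z. exp (- (min z (sqrt B))\<^sup>2 / B)"
  let ?m2 = "\<lambda>i. expectation (\<lambda>\<omega>. (?Y i \<omega>)\<^sup>2)"
  have "exp (- 1) \<le> (\<Prod>i\<in>I. ?f i (Z i \<omega>))" if "\<omega> \<in> A" for \<omega>
  proof -
    have "(\<Sum>i\<in>I. (?Y i \<omega>)\<^sup>2) \<le> (\<Sum>i\<in>I. (Z i \<omega>)\<^sup>2)"
      using nonneg \<open>0 < B\<close> by (intro sum_mono power_mono) auto
    also have "\<dots> \<le> B"
      using on_A[OF that] .
    finally have "- 1 \<le> (\<Sum>i\<in>I. - (?Y i \<omega>)\<^sup>2 / B)"
      using \<open>0 < B\<close> by (simp add: sum_divide_distrib[symmetric] sum_negf field_simps)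
    then show ?thesis
      by (simp add: exp_sum[symmetric] finite_I)
  qed
  then have "exp (- 1) * prob A \<le> expectation (\<lambda>\<omega>. \<Prod>i\<in>I. ?f i (Z i \<omega>))"
    using \<open>0 < B\<close> A(1) by (intro mult_prob_le_expectation integrable_const_bound[where B = 1])
      (auto simp: abs_prod intro!: prod_le_1 prod_nonneg)
  also have "\<dots> = (\<Prod>i\<in>I. expectation (\<lambda>\<omega>. ?f i (Z i \<omega>)))"
    using \<open>0 < B\<close> by (intro expectation_prod_indep_bounded[OF finite_I indep, where C = 1]) auto
  also have "\<dots> \<le> (\<Prod>i\<in>I. exp (- ?m2 i / (2 * B)))"
    using expectation_exp_neg_truncation_square[OF _ \<open>0 < B\<close>]
    by (intro prod_mono) auto
  also have "\<dots> = exp (- (\<Sum>i\<in>I. ?m2 i) / (2 * B))"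
    by (simp add: exp_sum[symmetric] finite_I sum_divide_distrib sum_negf)
  finally have "exp (- 1) * exp (- 1) \<le> exp (- (\<Sum>i\<in>I. ?m2 i) / (2 * B))"
    using A(2) by (smt (verit) exp_gt_zero mult_left_mono)
  then have "exp (- 2) \<le> exp (- (\<Sum>i\<in>I. ?m2 i) / (2 * B))"
    by (simp add: exp_add[symmetric])
  then show ?thesis
    using \<open>0 < B\<close> by (simp add: field_simps)
qed

lemma neg_sum_deviation_split:
  assumes "\<And>i. i \<in> I \<Longrightarrow> Z i \<omega> \<le> c"
  shows "- (\<Sum>i\<in>I. Z i \<omega> - expectation (Z i))
    = (\<Sum>i\<in>I. expectation (\<lambda>\<omega>. min (Z i \<omega>) c) - min (Z i \<omega>) c)
      + (\<Sum>i\<in>I. expectation (Z i) - expectation (\<lambda>\<omega>. min (Z i \<omega>) c))"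
  using assms by (simp add: sum_subtractf min_absorb1 sum_negf[symmetric])

lemma prob_deviation_on_event_pos:
  assumes A: "A \<in> events" "exp (- 1) \<le> prob A" and "0 < B" "0 < L"
    and on_A: "\<And>\<omega>. \<omega> \<in> A \<Longrightarrow> (\<Sum>i\<in>I. (Z i \<omega>)\<^sup>2) \<le> B"
  shows "prob {\<omega> \<in> A. max (4 * sqrt (2 * L * B)) (2 * sqrt (2 * (\<Sum>i\<in>I. expectation (\<lambda>\<omega>. (Z i \<omega>)\<^sup>2))))
      < \<bar>\<Sum>i\<in>I. Z i \<omega> - expectation (Z i)\<bar>} \<le> 2 * exp (- L)"
    (is "prob {\<omega> \<in> A. ?R < \<bar>?D \<omega>\<bar>} \<le> _")
proof -
  let ?S2 = "\<Sum>i\<in>I. expectation (\<lambda>\<omega>. (Z i \<omega>)\<^sup>2)"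
  let ?lower = "\<lambda>\<omega>. \<Sum>i\<in>I. expectation (\<lambda>\<omega>. min (Z i \<omega>) (sqrt B)) - min (Z i \<omega>) (sqrt B)"
  define Up where "Up = {\<omega> \<in> space M. (\<Sum>i\<in>I. (Z i \<omega>)\<^sup>2) \<le> B \<and> sqrt (2 * L * B) \<le> ?D \<omega>}"
  define Low where "Low = {\<omega> \<in> space M. sqrt (2 * L * (4 * B)) \<le> ?lower \<omega>}"
  have below: "Z i \<omega> \<le> sqrt B" if "\<omega> \<in> A" "i \<in> I" for \<omega> i
    using on_A[OF that(1)] that(2) finite_I by (intro le_sqrt_of_sum_squares_le)
  have "(\<Sum>i\<in>I. expectation (Z i) - expectation (\<lambda>\<omega>. min (Z i \<omega>) (sqrt B))) \<le> sqrt ?S2"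
    using sum_expectation_truncation_gap_le[OF A _ below] \<open>0 < B\<close> by simp
  also have "\<dots> \<le> sqrt (2 * ?S2)"
    by (simp add: sum_nonneg)
  finally have lower_le: "- ?D \<omega> \<le> ?lower \<omega> + sqrt (2 * ?S2)" if "\<omega> \<in> A" for \<omega>
    using neg_sum_deviation_split[OF below[OF that]] by linarith
  have "sqrt (2 * L * (4 * B)) = 2 * sqrt (2 * L * B)"
    using real_sqrt_mult[of 4 "2 * L * B"] by (simp add: mult_ac)
  \<comment> \<open>\<open>?R \<ge> 2 sqrt (2 L B) + sqrt (2 S2)\<close>, so by \<open>lower_le\<close> a negative deviation beyond \<open>?R\<close> lands in \<open>Low\<close>\<close>
  then have "{\<omega> \<in> A. ?R < \<bar>?D \<omega>\<bar>} \<subseteq> Up \<union> Low"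
    using on_A lower_le real_sqrt_ge_zero[of "2 * L * B"] sets.sets_into_space[OF A(1)]
    by (force simp: Up_def Low_def abs_if split: if_splits)
  then have "prob {\<omega> \<in> A. ?R < \<bar>?D \<omega>\<bar>} \<le> prob Up + prob Low"
    unfolding Up_def Low_def by (intro order_trans[OF finite_measure_mono measure_Un_le]) measurable
  also have "\<dots> \<le> exp (- L) + exp (- L)"
  proof (rule add_mono)
    show "prob Up \<le> exp (- L)"
      unfolding Up_def by (rule prob_upper_deviation[OF \<open>0 < B\<close> \<open>0 < L\<close>])
    show "prob Low \<le> exp (- L)"
      unfolding Low_def using sum_truncated_second_moment_le[OF A \<open>0 < B\<close> on_A] \<open>0 < B\<close> \<open>0 < L\<close>
      by (intro prob_lower_deviation_truncated) auto
  qed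
  finally show ?thesis
    by simp
qed

lemma prob_deviation_on_event:
  assumes A: "A \<in> events" "exp (- 1) \<le> prob A" and "0 \<le> B" "0 < L"
    and on_A: "\<And>\<omega>. \<omega> \<in> A \<Longrightarrow> (\<Sum>i\<in>I. (Z i \<omega>)\<^sup>2) \<le> B"
  shows "prob {\<omega> \<in> A. max (4 * sqrt (2 * L * B)) (2 * sqrt (2 * (\<Sum>i\<in>I. expectation (\<lambda>\<omega>. (Z i \<omega>)\<^sup>2))))
      < \<bar>\<Sum>i\<in>I. Z i \<omega> - expectation (Z i)\<bar>} \<le> 2 * exp (- L)"
    (is "prob {\<omega> \<in> A. ?R < \<bar>?D \<omega>\<bar>} \<le> _")
proof (cases "B = 0")
  case True
  let ?S2 = "\<Sum>i\<in>I. expectation (\<lambda>\<omega>. (Z i \<omega>)\<^sup>2)"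
  have below: "Z i \<omega> \<le> 0" if "\<omega> \<in> A" "i \<in> I" for \<omega> i
    using on_A[OF that(1)] that(2) finite_I True le_sqrt_of_sum_squares_le[where f = "\<lambda>i. Z i \<omega>" and B = 0]
    by simp
  have "(\<Sum>i\<in>I. expectation (Z i) - expectation (\<lambda>\<omega>. min (Z i \<omega>) 0)) \<le> sqrt ?S2"
    using sum_expectation_truncation_gap_le[OF A order_refl below] .
  also have "\<dots> \<le> sqrt (2 * ?S2)"
    by (simp add: sum_nonneg)
  finally have gap_le: "(\<Sum>i\<in>I. expectation (Z i) - expectation (\<lambda>\<omega>. min (Z i \<omega>) 0)) \<le> sqrt (2 * ?S2)" .
  \<comment> \<open>all summands vanish on \<open>A\<close>, so the deviation is minus the truncation gap at level \<open>0\<close>\<close>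
  have "\<bar>?D \<omega>\<bar> \<le> ?R" if "\<omega> \<in> A" for \<omega>
  proof -
    have "- ?D \<omega> \<le> sqrt (2 * ?S2)"
      using neg_sum_deviation_split[OF below[OF that]] gap_le nonneg by (simp add: min_absorb2)
    moreover have "0 \<le> expectation (Z i)" for i
      by (simp add: nonneg)
    then have "?D \<omega> \<le> 0"
      using below[OF that] by (intro sum_nonpos) (metis diff_le_0_iff_le order_trans)
    moreover have "0 \<le> sqrt (2 * ?S2)"
      by (simp add: sum_nonneg)
    ultimately have "\<bar>?D \<omega>\<bar> \<le> 2 * sqrt (2 * ?S2)"
      by linarith
    then show ?thesis
      by (rule max.coboundedI2)
  qed
  then have "{\<omega> \<in> A. ?R < \<bar>?D \<omega>\<bar>} = {}"
    by (blast dest: leD)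
  then show ?thesis
    by (simp del: Collect_empty_eq)
next
  case False
  with assms show ?thesis
    by (intro prob_deviation_on_event_pos) auto
qed

end

lemma (in prob_space) prob_emp_avg_deviation_on_event:
  fixes Z :: "nat \<Rightarrow> 'a \<Rightarrow> real"
  assumes "1 \<le> n" and indep: "indep_vars (\<lambda>_. borel) Z {1..n}" and nonneg: "\<And>i \<omega>. 0 \<le> Z i \<omega>"
    and square_integrable: "\<And>i. i \<in> {1..n} \<Longrightarrow> integrable M (\<lambda>\<omega>. (Z i \<omega>)\<^sup>2)"
    and A: "A \<in> events" "exp (- 1) \<le> prob A" and "0 \<le> Q" "0 < L"
    and on_A: "\<And>\<omega>. \<omega> \<in> A \<Longrightarrow> emp_avg n (\<lambda>i \<omega>. (Z i \<omega>)\<^sup>2) \<omega> \<le> Q"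
  shows "prob {\<omega> \<in> A. max (4 * sqrt (2 * L / real n * Q)) (2 * sqrt (2 * avg_expect M n (\<lambda>i \<omega>. (Z i \<omega>)\<^sup>2) / real n))
      < \<bar>emp_avg n Z \<omega> - avg_expect M n Z\<bar>} \<le> 2 * exp (- L)"
proof -
  interpret nonneg_indep_vars M Z "{1..n}"
    using indep nonneg square_integrable by unfold_locales auto
  have "0 < real n"
    using \<open>1 \<le> n\<close> by simp
  let ?S2 = "\<Sum>i=1..n. expectation (\<lambda>\<omega>. (Z i \<omega>)\<^sup>2)"
  let ?D = "\<lambda>\<omega>. \<Sum>i=1..n. Z i \<omega> - expectation (Z i)"
  have deviation: "\<bar>emp_avg n Z \<omega> - avg_expect M n Z\<bar> = \<bar>?D \<omega>\<bar> / real n" for \<omega>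
    by (simp add: emp_avg_def avg_expect_def sum_subtractf abs_divide flip: diff_divide_distrib)
  have "4 * sqrt (2 * L / real n * Q) = 4 * sqrt (2 * L * (real n * Q)) / real n"
    using real_sqrt_mult[of "2 * L / real n * Q" "(real n)\<^sup>2"] \<open>0 < real n\<close>
    by (simp add: power2_eq_square field_simps)
  moreover have "2 * sqrt (2 * avg_expect M n (\<lambda>i \<omega>. (Z i \<omega>)\<^sup>2) / real n) = 2 * sqrt (2 * ?S2) / real n"
    using real_sqrt_mult[of "2 * avg_expect M n (\<lambda>i \<omega>. (Z i \<omega>)\<^sup>2) / real n" "(real n)\<^sup>2"] \<open>0 < real n\<close>
    by (simp add: avg_expect_def power2_eq_square field_simps)
  ultimately have radius: "max (4 * sqrt (2 * L / real n * Q)) (2 * sqrt (2 * avg_expect M n (\<lambda>i \<omega>. (Z i \<omega>)\<^sup>2) / real n))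
      = max (4 * sqrt (2 * L * (real n * Q))) (2 * sqrt (2 * ?S2)) / real n"
    by (simp add: max_divide_distrib_right)
  have "(\<Sum>i=1..n. (Z i \<omega>)\<^sup>2) \<le> real n * Q" if "\<omega> \<in> A" for \<omega>
    using on_A[OF that] \<open>0 < real n\<close> by (simp add: emp_avg_def field_simps)
  then have "prob {\<omega> \<in> A. max (4 * sqrt (2 * L * (real n * Q))) (2 * sqrt (2 * ?S2)) < \<bar>?D \<omega>\<bar>} \<le> 2 * exp (- L)"
    using \<open>0 \<le> Q\<close> \<open>0 < real n\<close> by (intro prob_deviation_on_event[OF A _ \<open>0 < L\<close>]) simp_all
  then show ?thesis
    unfolding radius deviation using \<open>0 < real n\<close> by (simp add: divide_less_cancel)
qed

lemma (in prob_space) prob_max_emp_avg_deviation_le: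
  fixes Z :: "'p::finite \<Rightarrow> nat \<Rightarrow> 'a \<Rightarrow> real"
  assumes "1 \<le> n" and indep: "\<And>j. indep_vars (\<lambda>_. borel) (Z j) {1..n}"
    and nonneg: "\<And>j i \<omega>. 0 \<le> Z j i \<omega>"
    and square_integrable: "\<And>j i. i \<in> {1..n} \<Longrightarrow> integrable M (\<lambda>\<omega>. (Z j i \<omega>)\<^sup>2)"
    and "0 < \<tau>" "\<tau> \<le> 1 / 2"
  shows "1 - 2 * \<tau> \<le> prob {\<omega> \<in> space M.
      (MAX j. \<bar>emp_avg n (Z j) \<omega> - avg_expect M n (Z j)\<bar>)
      \<le> max (4 * sqrt (2 * ln (2 * real CARD('p) / \<tau>) / real n *
                quantile M (\<lambda>\<omega>. MAX j. emp_avg n (\<lambda>i \<omega>. (Z j i \<omega>)\<^sup>2) \<omega>) (1 - \<tau>)))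
            (2 * (MAX j. sqrt (2 * avg_expect M n (\<lambda>i \<omega>. (Z j i \<omega>)\<^sup>2) / real n)))}"
    (is "_ \<le> prob ?T")
proof -
  let ?W = "\<lambda>\<omega>. MAX j. emp_avg n (\<lambda>i \<omega>. (Z j i \<omega>)\<^sup>2) \<omega>"
  let ?Q = "quantile M ?W (1 - \<tau>)" and ?L = "ln (2 * real CARD('p) / \<tau>)"
  let ?dev = "\<lambda>j \<omega>. \<bar>emp_avg n (Z j) \<omega> - avg_expect M n (Z j)\<bar>"
  let ?R = "\<lambda>j. max (4 * sqrt (2 * ?L / real n * ?Q)) (2 * sqrt (2 * avg_expect M n (\<lambda>i \<omega>. (Z j i \<omega>)\<^sup>2) / real n))"
  define A where "A = {\<omega> \<in> space M. ?W \<omega> \<le> ?Q}"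
  define bad where "bad j = {\<omega> \<in> A. ?R j < ?dev j \<omega>}" for j
  have [measurable]: "Z j i \<in> borel_measurable M" if "i \<in> {1..n}" for j i
    using indep that by (auto simp: indep_vars_def)
  have W_measurable: "?W \<in> borel_measurable M"
    unfolding emp_avg_def by measurable
  have emp_avg_le_W: "emp_avg n (\<lambda>i \<omega>. (Z j i \<omega>)\<^sup>2) \<omega> \<le> ?W \<omega>" for j \<omega>
    by (rule Max_ge) auto
  have W_nonneg: "0 \<le> ?W \<omega>" for \<omega>
    using emp_avg_le_W[of undefined \<omega>] by (rule order_trans[rotated]) (simp add: emp_avg_def sum_nonneg)
  have Q_nonneg: "0 \<le> ?Q"
    using \<open>0 < \<tau>\<close> \<open>\<tau> \<le> 1 / 2\<close> by (intro quantile_nonneg[OF W_measurable W_nonneg]) auto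
  have prob_A: "1 - \<tau> \<le> prob A"
    unfolding A_def using \<open>0 < \<tau>\<close> \<open>\<tau> \<le> 1 / 2\<close> by (intro prob_le_quantile[OF W_measurable]) auto
  have A_events: "A \<in> events"
    unfolding A_def using W_measurable by measurable
  have "exp (- 1) \<le> (1 / 2 :: real)"
    using exp_ge_add_one_self[of 1] by (simp add: exp_minus field_simps)
  with prob_A \<open>\<tau> \<le> 1 / 2\<close> have "exp (- 1) \<le> prob A"
    by linarith
  have "1 \<le> real CARD('p)"
    by simp
  with \<open>\<tau> \<le> 1 / 2\<close> have "\<tau> < 2 * real CARD('p)"
    by linarith
  with \<open>0 < \<tau>\<close> have "0 < ?L"
    by (simp add: field_simps)
  have "prob (bad j) \<le> 2 * exp (- ?L)" for j
    unfolding bad_def using emp_avg_le_W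
    by (intro prob_emp_avg_deviation_on_event[OF \<open>1 \<le> n\<close> indep nonneg square_integrable
        A_events \<open>exp (- 1) \<le> prob A\<close> Q_nonneg \<open>0 < ?L\<close>]) (auto simp: A_def intro: order_trans)
  also have "2 * exp (- ?L) = \<tau> / real CARD('p)"
    using \<open>0 < \<tau>\<close> by (simp add: exp_minus)
  finally have prob_bad: "prob (bad j) \<le> \<tau> / real CARD('p)" for j .
  have "?R j \<le> max (4 * sqrt (2 * ?L / real n * ?Q)) (2 * (MAX j. sqrt (2 * avg_expect M n (\<lambda>i \<omega>. (Z j i \<omega>)\<^sup>2) / real n)))" for j
    by (intro max.mono order_refl mult_left_mono Max_ge) auto
  moreover have "(\<lambda>\<omega>. ?dev j \<omega>) \<in> borel_measurable M" for j
    unfolding emp_avg_def by measurable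
  ultimately have "prob A - real CARD('p) * (\<tau> / real CARD('p)) \<le> prob ?T"
    using A_events prob_bad unfolding bad_def by (intro prob_Max_le_ge_union_bound)
  with prob_A show ?thesis
    by simp
qed

theorem lemma6:
  fixes M :: "'a measure" and n :: nat and \<tau> :: real
    and x :: "nat \<Rightarrow> 'a \<Rightarrow> real ^ 'p" and eps :: "nat \<Rightarrow> 'a \<Rightarrow> real"
  assumes "prob_space M"
    and "n \<ge> 1"
    and "0 < \<tau>" and "\<tau> < 1"
    and indep: "prob_space.indep_vars M (\<lambda>_. borel) (\<lambda>i \<omega>. (x i \<omega>, eps i \<omega>)) {1..n}"
    and integ: "\<And>i j. i \<in> {1..n} \<Longrightarrow>
                  integrable M (\<lambda>\<omega>. (x i \<omega> $ j) ^ 4 * (eps i \<omega>) ^ 4)"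
  shows "measure M {\<omega> \<in> space M.
           (MAX j. \<bar>emp_avg n (\<lambda>i \<omega>. (x i \<omega> $ j)\<^sup>2 * (eps i \<omega>)\<^sup>2) \<omega>
                    - avg_expect M n (\<lambda>i \<omega>. (x i \<omega> $ j)\<^sup>2 * (eps i \<omega>)\<^sup>2)\<bar>)
           \<le> max (4 * sqrt (2 * ln (2 * real CARD('p) / \<tau>) / real n *
                     quantile M (\<lambda>\<omega>. MAX j. emp_avg n (\<lambda>i \<omega>. (x i \<omega> $ j) ^ 4 * (eps i \<omega>) ^ 4) \<omega>)
                       (1 - \<tau>)))
                  (2 * (MAX j. sqrt (2 * avg_expect M n (\<lambda>i \<omega>. (x i \<omega> $ j) ^ 4 * (eps i \<omega>) ^ 4)
                                      / real n)))}
         \<ge> 1 - 8 * \<tau>"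
proof -
  interpret prob_space M
    by (rule assms(1))
  have square: "((a :: real)\<^sup>2 * b\<^sup>2)\<^sup>2 = a ^ 4 * b ^ 4" for a b
    by algebra
  have indep_Z: "indep_vars (\<lambda>_. borel) (\<lambda>i \<omega>. (x i \<omega> $ j)\<^sup>2 * (eps i \<omega>)\<^sup>2) {1..n}" for j
    using indep_vars_compose2[OF indep, of "\<lambda>_ z. (fst z $ j)\<^sup>2 * (snd z)\<^sup>2" "\<lambda>_. borel"]
    by (simp add: borel_measurable_continuous_onI continuous_intros)
  have integ_Z: "integrable M (\<lambda>\<omega>. ((x i \<omega> $ j)\<^sup>2 * (eps i \<omega>)\<^sup>2)\<^sup>2)" if "i \<in> {1..n}" for i j
    using integ[OF that] by (simp add: square)
  note bound = prob_max_emp_avg_deviation_le[where Z = "\<lambda>j i \<omega>. (x i \<omega> $ j)\<^sup>2 * (eps i \<omega>)\<^sup>2",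
      OF \<open>n \<ge> 1\<close> indep_Z _ integ_Z \<open>0 < \<tau>\<close>, unfolded square]
  show ?thesis
  proof (cases "\<tau> \<le> 1 / 8")
    case True
    show ?thesis
      by (rule order_trans[OF _ bound]) (use True \<open>0 < \<tau>\<close> in auto)
  next
    case False
    then show ?thesis
      by (intro order_trans[OF _ measure_nonneg]) simp
  qed
qed

end
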